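(* Let $k\ge2$, let $n_1,\dots,n_m$ be positive reals and $n=n_1+\cdots+n_m$. Let $F_k(x)=\left(\frac nk x\right)^{\frac1{k-1}}$ for $x\in[0,\frac kn]$ and $F_k(x)=1$ for $x>\frac kn$. In the $m$-group auction described in the context, suppose each of the $k-1$ disadvantaged bidders, independently, bids $n_i b_i$ on group $i$, where $(b_1,\dots,b_m)$ is drawn from an $m$-dimensional distribution such that each $b_i$ has cumulative distribution function $F_k$ and $n_1b_1+\cdots+n_mb_m=1$. Then the maximum over strategies of the adversary ${\mathcal A}$ of the expected number of objects won by ${\mathcal A}$ equals $n/k$.
   Context: $m$-group auction model: objects are divided into $m$ groups, group $i$ containing $n_i$ objects ($n_i$ a positive real, interpreted as the value of the group); the total number of objects is $n=\sum_i n_i$. There are $k$ bidders: an adversary ${\mathcal A}$ and $k-1$ disadvantaged bidders; each has budget $1$ and submits simultaneously nonnegative bids for the $m$ groups with total at most $1$. The highest bidder on a group obtains all $n_i$ objects in it; if $j$ bidders tie for the highest bid, each wins the group with probability $1/j$. ${\mathcal A}$ knows the disadvantaged bidders' bidding algorithm but not their realized bids; his bids are independent of theirs. *)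

theory Defs
  imports "HOL-Probability.Probability"
begin

definition Fk :: "nat \<Rightarrow> real \<Rightarrow> real \<Rightarrow> real" where
  "Fk k n x = (if x < 0 then 0
               else if x \<le> real k / n then (n / real k * x) powr (1 / (real k - 1))
               else 1)"

text \<open>Probability that the adversary, bidding a, wins a group against r other bids
  bids 0, ..., bids (r-1), with uniform tie-breaking among the highest bidders.\<close>
definition win_share :: "nat \<Rightarrow> real \<Rightarrow> (nat \<Rightarrow> real) \<Rightarrow> real" where
  "win_share r a bids =
     (if (\<forall>j<r. bids j \<le> a) then 1 / (1 + real (card {j. j < r \<and> bids j = a})) else 0)"

text \<open>Expected number of objects won by the adversary with pure bid vector a, when each
  of the k-1 disadvantaged bidders independently draws b from D and bids nv i * b i on group i.\<close>
definition expected_objects ::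
  "nat \<Rightarrow> ('m::finite \<Rightarrow> real) \<Rightarrow> ('m \<Rightarrow> real) measure \<Rightarrow> ('m \<Rightarrow> real) \<Rightarrow> real" where
  "expected_objects k nv D a =
     (\<integral>\<omega>. (\<Sum>i\<in>UNIV. nv i * win_share (k - 1) (a i) (\<lambda>j. nv i * \<omega> j i))
        \<partial>(PiM {..<k - 1} (\<lambda>_. D)))"

definition feasible_bid :: "('m::finite \<Rightarrow> real) \<Rightarrow> bool" where
  "feasible_bid a \<longleftrightarrow> (\<forall>i. 0 \<le> a i) \<and> (\<Sum>i\<in>UNIV. a i) \<le> 1"

definition adversary_strategy :: "('m::finite \<Rightarrow> real) measure \<Rightarrow> bool" where
  "adversary_strategy A \<longleftrightarrow> prob_space A \<and> sets A = sets (PiM UNIV (\<lambda>_::'m. borel))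
      \<and> (AE a in A. feasible_bid a)"

end

theory Submission
  imports Defs
begin

(* Fix a group i and a pure bid a_i of the adversary. Since F_k is continuous, the k - 1
   independent opposing bids n_i b_i tie with a_i only on a null set, so the adversary wins
   the group with probability F_k(a_i / n_i)^(k-1) = min 1 (max 0 (n a_i / (k n_i))).
   A pure bid therefore earns sum_i min n_i (max 0 (n a_i / k)) <= (n / k) sum_i a_i <= n / k,
   with equality for the proportional bid a_i = n_i / n, and a mixed strategy only averages
   pure ones. *)

lemma Fk_eq_clamp_powr:
  assumes "k \<ge> 2" "n > 0"
  shows "Fk k n x = min 1 (max 0 (n / real k * x)) powr (1 / (real k - 1))"
proof -
  have k: "real k > 0" using assms by simp
  consider "x < 0" | "0 \<le> x" "x \<le> real k / n" | "x > real k / n" by linarith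
  then show ?thesis
  proof cases
    case 1
    then have "n * x < 0" using assms by (simp add: mult_pos_neg)
    then have "n / real k * x < 0" using k by (simp add: divide_neg_pos)
    then show ?thesis using 1 by (simp add: Fk_def)
  next
    case 2
    then have "n / real k * x \<le> 1" "0 \<le> n / real k * x" using assms k
      by (auto simp: field_simps)
    then show ?thesis using 2 by (simp add: Fk_def)
  next
    case 3
    moreover have "real k / n > 0" using assms k by simp
    moreover have "n / real k * x > 1" using 3 assms k by (auto simp: field_simps)
    ultimately show ?thesis by (simp add: Fk_def)
  qed
qed

lemma isCont_Fk:
  assumes "k \<ge> 2" "n > 0"
  shows "isCont (Fk k n) x"
proof -
  have "((\<lambda>x. min 1 (max 0 (n / real k * x)) powr (1 / (real k - 1))) \<longlongrightarrow>
        min 1 (max 0 (n / real k * x)) powr (1 / (real k - 1))) (at x)"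
    using assms by (intro tendsto_powr2) (auto intro!: tendsto_intros)
  then show ?thesis
    unfolding isCont_def Fk_eq_clamp_powr[OF assms, abs_def] .
qed

lemma Fk_power:
  assumes "k \<ge> 2" "n > 0"
  shows "Fk k n x ^ (k - 1) = min 1 (max 0 (n / real k * x))"
proof -
  define y where "y = min 1 (max 0 (n / real k * x))"
  have "(y powr (1 / (real k - 1))) ^ (k - 1) = y"
  proof (cases "y = 0")
    case False
    then have "y > 0" by (simp add: y_def)
    then have "(y powr (1 / (real k - 1))) ^ (k - 1) = (y powr (1 / (real k - 1))) powr real (k - 1)"
      by (simp add: powr_realpow)
    also have "\<dots> = y" using assms \<open>y > 0\<close> by (simp add: powr_powr of_nat_diff)
    finally show ?thesis .
  qed (use assms in simp)
  then show ?thesis using Fk_eq_clamp_powr[OF assms] y_def by simp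
qed

lemma (in prob_space) measure_eq_point_0_if_isCont_cdf:
  fixes X :: "'a \<Rightarrow> real"
  assumes X: "X \<in> borel_measurable M"
    and cdf: "\<And>y. measure M {\<omega> \<in> space M. X \<omega> \<le> y} = F y"
    and cont: "isCont F x"
  shows "measure M {\<omega> \<in> space M. X \<omega> = x} = 0"
proof -
  interpret P: real_distribution "distr M borel X" using X by simp
  have "cdf (distr M borel X) = F"
    using X by (auto simp: cdf_def measure_distr vimage_def Int_def conj_commute cdf[symmetric])
  then have "measure (distr M borel X) {x} = 0" using cont P.isCont_cdf by simp
  then show ?thesis using X by (simp add: measure_distr vimage_def Int_def conj_commute)
qed

lemma win_share_no_tie:
  assumes "\<forall>j<r. bids j \<noteq> a"
  shows "win_share r a bids = (if \<forall>j<r. bids j \<le> a then 1 else 0)"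
  using assms unfolding win_share_def by simp

lemma real_card_less_Collect:
  "real (card {j. j < (r::nat) \<and> P j}) = (\<Sum>j<r. if P j then 1 else 0)"
proof -
  have "{j. j < r \<and> P j} = {j \<in> {..<r}. P j}" by auto
  then have "real (card {j. j < r \<and> P j}) = (\<Sum>j\<in>{j \<in> {..<r}. P j}. 1)" by simp
  also have "\<dots> = (\<Sum>j<r. if P j then 1 else 0 :: real)" by (rule sum.inter_filter) simp
  finally show ?thesis .
qed

lemma borel_measurable_PiM_component_comp:
  assumes "f \<in> borel_measurable M"
  shows "(\<lambda>\<omega>. f (\<omega> j)) \<in> borel_measurable (PiM I (\<lambda>_. M))"
proof (cases "j \<in> I")
  case True
  then show ?thesis using assms by measurable
next
  case False
  then have "f (\<omega> j) = f undefined" if "\<omega> \<in> space (PiM I (\<lambda>_. M))" for \<omega>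
    using that by (auto simp: space_PiM PiE_def extensional_def)
  then show ?thesis by (subst measurable_cong[where g = "\<lambda>_. f undefined"]) auto
qed

lemma borel_measurable_win_share_PiM:
  assumes [measurable]: "Y \<in> borel_measurable M"
  shows "(\<lambda>\<omega>. win_share r a (\<lambda>j. Y (\<omega> j))) \<in> borel_measurable (PiM I (\<lambda>_. M))"
proof -
  note [measurable] = borel_measurable_PiM_component_comp[OF assms]
  show ?thesis unfolding win_share_def real_card_less_Collect by measurable
qed

lemma integral_win_share_iid:
  assumes D: "prob_space D" and Y[measurable]: "Y \<in> borel_measurable D"
    and no_atom: "measure D {b \<in> space D. Y b = a} = 0"
  shows "(\<integral>\<omega>. win_share r a (\<lambda>j. Y (\<omega> j)) \<partial>PiM {..<r} (\<lambda>_. D))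
           = measure D {b \<in> space D. Y b \<le> a} ^ r"
proof -
  interpret D: prob_space D by (rule D)
  interpret finite_product_prob_space "\<lambda>_. D" "{..<r}"
    by unfold_locales (auto intro: D)
  let ?W = "{b \<in> space D. Y b \<le> a}"
  have "AE b in D. Y b \<noteq> a"
    using no_atom by (subst (asm) D.prob_Collect_eq_0) auto
  then have "AE \<omega> in PiM {..<r} (\<lambda>_. D). \<forall>j\<in>{..<r}. Y (\<omega> j) \<noteq> a"
    by (intro AE_finite_allI AE_PiM_component) (auto intro: D)
  then have "AE \<omega> in PiM {..<r} (\<lambda>_. D).
      win_share r a (\<lambda>j. Y (\<omega> j)) = indicator (PiE {..<r} (\<lambda>_. ?W)) \<omega>"
    using AE_space by eventually_elim (auto simp: win_share_no_tie space_PiM PiE_iff indicator_def)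
  then have "(\<integral>\<omega>. win_share r a (\<lambda>j. Y (\<omega> j)) \<partial>PiM {..<r} (\<lambda>_. D))
      = prob (PiE {..<r} (\<lambda>_. ?W))"
    by (subst integral_cong_AE[where g = "indicator (PiE {..<r} (\<lambda>_. ?W))"])
       (auto intro: borel_measurable_win_share_PiM sets_PiM_I_finite)
  also have "\<dots> = measure D ?W ^ r"
    by (subst prob_times) auto
  finally show ?thesis .
qed


context
  fixes k :: nat and nv :: "'m::finite \<Rightarrow> real" and D :: "('m \<Rightarrow> real) measure"
  assumes k: "k \<ge> 2"
    and nv_pos: "\<forall>i. nv i > 0"
    and D: "prob_space D"
    and sets_D: "sets D = sets (PiM UNIV (\<lambda>_::'m. borel))"
    and cdf_D: "\<forall>i x. measure D {b \<in> space D. b i \<le> x} = Fk k (\<Sum>i\<in>UNIV. nv i) x"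
begin

lemma sum_nv_pos: "(\<Sum>i\<in>UNIV. nv i) > 0"
  using nv_pos by (simp add: sum_pos)

lemma borel_measurable_coordinate: "(\<lambda>b. b i) \<in> borel_measurable D"
  unfolding measurable_cong_sets[OF sets_D refl] by measurable

lemma integral_win_share_group:
  "(\<integral>\<omega>. win_share (k - 1) a (\<lambda>j. nv i * \<omega> j i) \<partial>PiM {..<k - 1} (\<lambda>_. D))
     = min 1 (max 0 ((\<Sum>i\<in>UNIV. nv i) / real k * (a / nv i)))"
proof -
  let ?n = "\<Sum>i\<in>UNIV. nv i"
  note [measurable] = borel_measurable_coordinate
  have nv: "nv i > 0" using nv_pos by simp
  have le: "{b \<in> space D. nv i * b i \<le> a} = {b \<in> space D. b i \<le> a / nv i}"
    using nv by (auto simp: field_simps)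
  have eq: "{b \<in> space D. nv i * b i = a} = {b \<in> space D. b i = a / nv i}"
    using nv by (auto simp: field_simps)
  have "measure D {b \<in> space D. b i = a / nv i} = 0"
    using cdf_D isCont_Fk[OF k sum_nv_pos]
    by (intro prob_space.measure_eq_point_0_if_isCont_cdf[OF D]) auto
  then have "(\<integral>\<omega>. win_share (k - 1) a (\<lambda>j. nv i * \<omega> j i) \<partial>PiM {..<k - 1} (\<lambda>_. D))
      = Fk k ?n (a / nv i) ^ (k - 1)"
    using cdf_D by (subst integral_win_share_iid[OF D]) (auto simp: le eq)
  then show ?thesis unfolding Fk_power[OF k sum_nv_pos] .
qed

lemma expected_objects_eq:
  "expected_objects k nv D a
     = (\<Sum>i\<in>UNIV. min (nv i) (max 0 ((\<Sum>i\<in>UNIV. nv i) / real k * a i)))"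
proof -
  let ?M = "PiM {..<k - 1} (\<lambda>_. D)"
  interpret M: prob_space ?M using D by (rule prob_space_PiM)
  have "integrable ?M (\<lambda>\<omega>. win_share (k - 1) (a i) (\<lambda>j. nv i * \<omega> j i))" for i
    using borel_measurable_coordinate
    by (intro M.integrable_const_bound[where B = 1] AE_I2 borel_measurable_win_share_PiM)
       (auto simp: win_share_def)
  then have "expected_objects k nv D a
      = (\<Sum>i\<in>UNIV. nv i * (\<integral>\<omega>. win_share (k - 1) (a i) (\<lambda>j. nv i * \<omega> j i) \<partial>?M))"
    unfolding expected_objects_def by (subst Bochner_Integration.integral_sum) auto
  also have "\<dots> = (\<Sum>i\<in>UNIV. nv i * min 1 (max 0 ((\<Sum>i\<in>UNIV. nv i) / real k * (a i / nv i))))"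
    by (simp only: integral_win_share_group)
  also have "\<dots> = (\<Sum>i\<in>UNIV. min (nv i) (max 0 ((\<Sum>i\<in>UNIV. nv i) / real k * a i)))"
    using nv_pos by (intro sum.cong) (auto simp: min_mult_distrib_left max_mult_distrib_left less_imp_le)
  finally show ?thesis .
qed

lemma expected_objects_le_if_feasible:
  assumes "feasible_bid a"
  shows "expected_objects k nv D a \<le> (\<Sum>i\<in>UNIV. nv i) / real k"
proof -
  let ?c = "(\<Sum>i\<in>UNIV. nv i) / real k"
  have c: "?c \<ge> 0" using sum_nv_pos by simp
  have "0 \<le> ?c * a i" for i
    using assms c unfolding feasible_bid_def by (blast intro: mult_nonneg_nonneg)
  then have "expected_objects k nv D a \<le> (\<Sum>i\<in>UNIV. ?c * a i)"
    unfolding expected_objects_eq by (intro sum_mono) (simp add: min.coboundedI2)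
  also have "\<dots> = ?c * (\<Sum>i\<in>UNIV. a i)"
    by (simp add: sum_distrib_left)
  also have "\<dots> \<le> ?c"
    using assms c by (intro mult_left_le) (auto simp: feasible_bid_def)
  finally show ?thesis .
qed

lemma expected_objects_proportional_bid:
  "expected_objects k nv D (\<lambda>i. nv i / (\<Sum>i\<in>UNIV. nv i)) = (\<Sum>i\<in>UNIV. nv i) / real k"
proof -
  have "min (nv i) (max 0 ((\<Sum>i\<in>UNIV. nv i) / real k * (nv i / (\<Sum>i\<in>UNIV. nv i))))
      = nv i / real k" for i
  proof -
    have "(\<Sum>i\<in>UNIV. nv i) / real k * (nv i / (\<Sum>i\<in>UNIV. nv i)) = nv i / real k"
      using sum_nv_pos by simp
    moreover have "0 \<le> nv i / real k" "nv i / real k \<le> nv i"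
      using nv_pos[rule_format, of i] k by (simp_all add: divide_le_eq)
    ultimately show ?thesis by simp
  qed
  then show ?thesis
    by (simp add: expected_objects_eq sum_divide_distrib)
qed

lemma borel_measurable_expected_objects:
  "expected_objects k nv D \<in> borel_measurable (PiM UNIV (\<lambda>_::'m. borel))"
  unfolding expected_objects_eq[abs_def] by measurable

lemma abs_expected_objects_le: "\<bar>expected_objects k nv D a\<bar> \<le> (\<Sum>i\<in>UNIV. nv i)"
proof -
  have "0 \<le> min (nv i) (max 0 t)" "min (nv i) (max 0 t) \<le> nv i" for i t
    using nv_pos[rule_format, of i] by auto
  then show ?thesis
    unfolding expected_objects_eq by (simp add: sum_nonneg sum_mono)
qed

end

lemma adversary_strategy_return:
  fixes a :: "'m::finite \<Rightarrow> real"
  assumes "feasible_bid a"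
  shows "adversary_strategy (return (PiM UNIV (\<lambda>_::'m. borel)) a)"
proof -
  have a: "a \<in> space (PiM UNIV (\<lambda>_::'m. borel))" by (simp add: space_PiM)
  have "Measurable.pred (PiM UNIV (\<lambda>_::'m. borel)) feasible_bid"
    unfolding feasible_bid_def by measurable
  then show ?thesis
    unfolding adversary_strategy_def using prob_space_return[OF a] AE_return[OF a] assms by simp
qed

lemma integral_adversary_strategy_le:
  fixes f :: "('m::finite \<Rightarrow> real) \<Rightarrow> real"
  assumes A: "adversary_strategy A"
    and f: "f \<in> borel_measurable (PiM UNIV (\<lambda>_::'m. borel))"
    and bounded: "\<And>a. \<bar>f a\<bar> \<le> B"
    and le: "\<And>a. feasible_bid a \<Longrightarrow> f a \<le> c"
  shows "(\<integral>a. f a \<partial>A) \<le> c"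
proof -
  interpret A: prob_space A using A by (simp add: adversary_strategy_def)
  have "sets A = sets (PiM UNIV (\<lambda>_::'m. borel))"
    using A by (simp add: adversary_strategy_def)
  then have "f \<in> borel_measurable A"
    using f measurable_cong_sets[of A "PiM UNIV (\<lambda>_::'m. borel)" borel borel] by simp
  then have "integrable A f"
    using bounded by (intro A.integrable_const_bound[where B = B]) auto
  moreover have "AE a in A. f a \<le> c"
    using A le unfolding adversary_strategy_def by (auto elim: AE_mp)
  ultimately show ?thesis by (rule A.integral_le_const)
qed

theorem lemma5p2:
  fixes nv :: "'m::finite \<Rightarrow> real" and k :: nat and D :: "('m \<Rightarrow> real) measure"
  assumes "k \<ge> 2"
    and "\<forall>i. nv i > 0"
    and "prob_space D"
    and "sets D = sets (PiM UNIV (\<lambda>_::'m. borel))"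
    and "\<forall>i x. measure D {b \<in> space D. b i \<le> x} = Fk k (\<Sum>i\<in>UNIV. nv i) x"
    and "AE b in D. (\<Sum>i\<in>UNIV. nv i * b i) = 1"
  shows "(\<forall>A. adversary_strategy A \<longrightarrow>
            (\<integral>a. expected_objects k nv D a \<partial>A) \<le> (\<Sum>i\<in>UNIV. nv i) / real k)
       \<and> (\<exists>A. adversary_strategy A \<and>
            (\<integral>a. expected_objects k nv D a \<partial>A) = (\<Sum>i\<in>UNIV. nv i) / real k)"
proof -
  let ?n = "\<Sum>i\<in>UNIV. nv i"
  let ?A = "return (PiM UNIV (\<lambda>_::'m. borel)) (\<lambda>i. nv i / ?n)"
  have "?n > 0" using assms(2) by (simp add: sum_pos)
  then have "feasible_bid (\<lambda>i. nv i / ?n)"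
    using assms(2) by (auto simp: feasible_bid_def less_imp_le simp flip: sum_divide_distrib)
  moreover have "(\<integral>a. expected_objects k nv D a \<partial>?A) = ?n / real k"
    using borel_measurable_expected_objects[OF assms(1-5)]
    by (simp add: integral_return space_PiM expected_objects_proportional_bid[OF assms(1-5)])
  moreover have "(\<integral>a. expected_objects k nv D a \<partial>A) \<le> ?n / real k"
    if "adversary_strategy A" for A
    using integral_adversary_strategy_le[OF that borel_measurable_expected_objects[OF assms(1-5)]
        abs_expected_objects_le[OF assms(1-5)] expected_objects_le_if_feasible[OF assms(1-5)]] .
  ultimately show ?thesis
    using adversary_strategy_return by blast
qed

end
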